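(* Let $k \ge 2$ be an integer, let $\Pi$ be a $(k-1)\times k$ real matrix whose rows form an orthonormal basis of the orthogonal complement of the all-ones vector in $\mathbb{R}^k$, let $B$ be the $k \times \binom{k}{2}$ matrix whose columns are the vectors $e_i - e_j$ for all pairs $i<j$, and let $G = \Pi B / \sqrt{k}$. Then: (a) every column of $G$ has Euclidean norm $\sqrt{2/k}$; (b) $G G^T = I_{k-1}$; (c) for every real $\binom{k}{2}\times\binom{k}{2}$ diagonal matrix $D$, \[ \| G D G^T \| \geq \frac{1}{k}\sqrt{\frac{2}{k-1}}\, \|D\|_F, \] where $\|\cdot\|$ is the operator norm and $\|D\|_F$ is the Frobenius norm. *)

theory Defs
  imports "HOL-Analysis.Analysis" "Jordan_Normal_Form.Matrix"
begin

definition vnorm :: "real vec \<Rightarrow> real" where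
  "vnorm v = sqrt (v \<bullet> v)"

definition op_norm :: "real mat \<Rightarrow> real" where
  "op_norm A = Sup {vnorm (A *\<^sub>v v) | v. v \<in> carrier_vec (dim_col A) \<and> vnorm v \<le> 1}"

definition frob_norm :: "real mat \<Rightarrow> real" where
  "frob_norm A = sqrt (\<Sum>i<dim_row A. \<Sum>j<dim_col A. (A $$ (i, j))^2)"

definition pairs :: "nat \<Rightarrow> (nat \<times> nat) list" where
  "pairs k = concat (map (\<lambda>i. map (\<lambda>j. (i, j)) [Suc i..<k]) [0..<k])"

definition incB :: "nat \<Rightarrow> real mat" where
  "incB k = mat_of_cols k (map (\<lambda>(i, j). unit_vec k i - unit_vec k j) (pairs k))"

end

theory Submission
  imports Defs
begin

text \<open>
  Since the rows of \<open>P\<close> form an orthonormal basis of the complement of the all-ones vector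
  \<open>\<one>\<close>, \<open>P\<close> preserves inner products of vectors orthogonal to \<open>\<one>\<close>, and the columns
  \<open>e\<^sub>i - e\<^sub>j\<close> of \<open>B\<close> are such vectors. Hence \<open>G\<^sup>T G = B\<^sup>T B / k\<close>, whose entry at the
  columns \<open>a = (i, j)\<close>, \<open>b = (p, q)\<close> is \<open>(e\<^sub>i - e\<^sub>j) \<bullet> (e\<^sub>p - e\<^sub>q) / k\<close>; this gives (a). For (b), \<open>(G G\<^sup>T)\<^sub>s\<^sub>t\<close> is a sum over pairs
  of \<open>(x\<^sub>i - x\<^sub>j)(y\<^sub>i - y\<^sub>j)\<close> for two rows \<open>x, y\<close> of \<open>P\<close>, which by Lagrange's identity equals
  \<open>k (x \<bullet> y) - (x \<bullet> \<one>)(y \<bullet> \<one>)\<close>.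

  For (c), with \<open>D = diag d\<close> one has \<open>\<parallel>G D G\<^sup>T\<parallel>\<^sub>F\<^sup>2 = \<Sum>\<^sub>a\<^sub>b d\<^sub>a d\<^sub>b (G\<^sup>T G)\<^sub>a\<^sub>b\<^sup>2\<close>, and
  \<open>((e\<^sub>i - e\<^sub>j) \<bullet> (e\<^sub>p - e\<^sub>q))\<^sup>2 = 2 \<delta>\<^sub>a\<^sub>b + (e\<^sub>i + e\<^sub>j) \<bullet> (e\<^sub>p + e\<^sub>q)\<close>. The second summand is a Gram
  matrix, hence positive semidefinite, so \<open>\<parallel>G D G\<^sup>T\<parallel>\<^sub>F\<^sup>2 \<ge> 2 \<parallel>D\<parallel>\<^sub>F\<^sup>2 / k\<^sup>2\<close>. Finally the
  Frobenius norm of a matrix with \<open>k - 1\<close> columns is at most \<open>\<surd>(k - 1)\<close> times its operator norm.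
\<close>

section \<open>Entrywise formulas and matrix norms\<close>

lemma scalar_prod_sum:
  "w \<in> carrier_vec n \<Longrightarrow> v \<bullet> w = (\<Sum>j<n. v $ j * w $ j)"
  by (simp add: scalar_prod_def atLeast0LessThan)

lemma index_mult_mat_sum:
  assumes "A \<in> carrier_mat n l" "B \<in> carrier_mat l m" "i < n" "j < m"
  shows "(A * B) $$ (i, j) = (\<Sum>t<l. A $$ (i, t) * B $$ (t, j))"
  using assms by (subst index_mult_mat) (auto simp: scalar_prod_sum[of _ l] intro!: sum.cong)

lemma vnorm_eq_sqrt_sum: "vnorm v = sqrt (\<Sum>j<dim_vec v. (v $ j)\<^sup>2)"
  by (simp add: vnorm_def scalar_prod_def atLeast0LessThan power2_eq_square)

lemma vnorm_nonneg: "0 \<le> vnorm v"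
  by (simp add: vnorm_eq_sqrt_sum sum_nonneg)

lemma vnorm_sq: "(vnorm v)\<^sup>2 = (\<Sum>j<dim_vec v. (v $ j)\<^sup>2)"
  by (simp add: vnorm_eq_sqrt_sum sum_nonneg)

lemma bdd_above_op_norm_set:
  "bdd_above {vnorm (A *\<^sub>v v) | v. v \<in> carrier_vec (dim_col A) \<and> vnorm v \<le> 1}"
proof (rule bdd_aboveI)
  fix y assume "y \<in> {vnorm (A *\<^sub>v v) | v. v \<in> carrier_vec (dim_col A) \<and> vnorm v \<le> 1}"
  then obtain v where v: "v \<in> carrier_vec (dim_col A)" "vnorm v \<le> 1" and y: "y = vnorm (A *\<^sub>v v)"
    by auto
  have v_entry: "\<bar>v $ j\<bar> \<le> 1" if "j < dim_col A" for j
  proof -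
    have "(v $ j)\<^sup>2 \<le> (vnorm v)\<^sup>2"
      unfolding vnorm_sq using v that by (intro member_le_sum) auto
    also have "\<dots> \<le> 1" using v vnorm_nonneg[of v] by (simp add: power_le_one)
    finally show ?thesis by (simp add: abs_square_le_1)
  qed
  have Av_entry: "((A *\<^sub>v v) $ i)\<^sup>2 \<le> (\<Sum>j<dim_col A. \<bar>A $$ (i, j)\<bar>)\<^sup>2" if "i < dim_row A" for i
  proof -
    have "\<bar>(A *\<^sub>v v) $ i\<bar> = \<bar>(\<Sum>j<dim_col A. A $$ (i, j) * v $ j)\<bar>"
      using v that by (simp add: scalar_prod_sum)
    also have "\<dots> \<le> (\<Sum>j<dim_col A. \<bar>A $$ (i, j)\<bar>)"
      by (rule order_trans[OF sum_abs], rule sum_mono) (auto simp: abs_mult intro: mult_left_le v_entry)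
    finally show ?thesis by (metis abs_ge_zero power2_abs power_mono)
  qed
  have "y\<^sup>2 \<le> (\<Sum>i<dim_row A. (\<Sum>j<dim_col A. \<bar>A $$ (i, j)\<bar>)\<^sup>2)"
    unfolding y vnorm_sq dim_mult_mat_vec by (rule sum_mono) (rule Av_entry; simp)
  then show "y \<le> sqrt (\<Sum>i<dim_row A. (\<Sum>j<dim_col A. \<bar>A $$ (i, j)\<bar>)\<^sup>2)"
    using real_le_rsqrt by blast
qed

lemma vnorm_col_le_op_norm:
  assumes "j < dim_col A"
  shows "vnorm (col A j) \<le> op_norm A"
proof -
  have "A *\<^sub>v unit_vec (dim_col A) j = col A j"
    using assms by (intro eq_vecI) auto
  moreover have "vnorm (unit_vec (dim_col A) j) = 1"
    using assms by (simp add: vnorm_def)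
  ultimately have "vnorm (col A j) \<in> {vnorm (A *\<^sub>v v) | v. v \<in> carrier_vec (dim_col A) \<and> vnorm v \<le> 1}"
    by (metis (mono_tags, lifting) mem_Collect_eq order_refl unit_vec_carrier)
  then show ?thesis
    unfolding op_norm_def by (rule cSup_upper[OF _ bdd_above_op_norm_set])
qed

lemma op_norm_nonneg: "0 \<le> op_norm A"
proof -
  have "vnorm (A *\<^sub>v 0\<^sub>v (dim_col A)) \<in> {vnorm (A *\<^sub>v v) | v. v \<in> carrier_vec (dim_col A) \<and> vnorm v \<le> 1}"
    by (auto simp: vnorm_def intro!: exI[of _ "0\<^sub>v (dim_col A)"])
  then have "vnorm (A *\<^sub>v 0\<^sub>v (dim_col A)) \<le> op_norm A"
    unfolding op_norm_def by (rule cSup_upper[OF _ bdd_above_op_norm_set])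
  then show ?thesis
    using vnorm_nonneg order_trans by blast
qed

lemma frob_norm_sq_le_op_norm_sq: "(frob_norm A)\<^sup>2 \<le> dim_col A * (op_norm A)\<^sup>2"
proof -
  have "(frob_norm A)\<^sup>2 = (\<Sum>j<dim_col A. (vnorm (col A j))\<^sup>2)"
    by (simp add: frob_norm_def vnorm_sq sum_nonneg sum.swap[of _ "{..<dim_row A}"])
  also have "\<dots> \<le> (\<Sum>j<dim_col A. (op_norm A)\<^sup>2)"
    by (intro sum_mono power_mono vnorm_col_le_op_norm vnorm_nonneg) simp
  finally show ?thesis by simp
qed

lemma frob_norm_diagonal_sq:
  assumes "D \<in> carrier_mat n n" "diagonal_mat D"
  shows "(frob_norm D)\<^sup>2 = (\<Sum>a<n. (D $$ (a, a))\<^sup>2)"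
proof -
  have "(\<Sum>b<n. (D $$ (a, b))\<^sup>2) = (D $$ (a, a))\<^sup>2" if "a < n" for a
    using assms that by (subst sum.remove[of _ a]) (auto simp: diagonal_mat_def intro!: sum.neutral)
  then show ?thesis
    using assms by (simp add: frob_norm_def sum_nonneg)
qed

lemma frob_norm_mult_diagonal_mult_transpose_sq:
  fixes G D :: "real mat"
  assumes G: "G \<in> carrier_mat n m" and D: "D \<in> carrier_mat m m" "diagonal_mat D"
  shows "(frob_norm (G * D * transpose_mat G))\<^sup>2
       = (\<Sum>a<m. \<Sum>b<m. D $$ (a, a) * D $$ (b, b) * (col G a \<bullet> col G b)\<^sup>2)"
proof -
  define d where "d a = D $$ (a, a)" for a
  have GD: "(G * D) $$ (s, b) = G $$ (s, b) * d b" if "s < n" "b < m" for s b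
  proof -
    have "(G * D) $$ (s, b) = (\<Sum>a<m. G $$ (s, a) * (if a = b then d b else 0))"
      using D that by (subst index_mult_mat_sum[OF G D(1) that])
        (auto simp: diagonal_mat_def d_def intro!: sum.cong)
    then show ?thesis using that by (simp add: if_distrib[of "\<lambda>x. _ * x"] cong: if_cong)
  qed
  define M where "M = G * D * transpose_mat G"
  have entry: "M $$ (s, t) = (\<Sum>a<m. G $$ (s, a) * d a * G $$ (t, a))" if "s < n" "t < n" for s t
    unfolding M_def using G D that
    by (subst index_mult_mat_sum[of "G * D" n m "transpose_mat G" n])
      (auto simp del: index_mult_mat simp: GD intro!: sum.cong)
  have "(frob_norm M)\<^sup>2 = (\<Sum>s<n. \<Sum>t<n. (\<Sum>a<m. G $$ (s, a) * d a * G $$ (t, a))\<^sup>2)"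
  proof -
    have "dim_row M = n" "dim_col M = n" unfolding M_def using G D by auto
    then show ?thesis unfolding frob_norm_def by (simp add: sum_nonneg entry)
  qed
  also have "\<dots> = (\<Sum>s<n. \<Sum>t<n. \<Sum>a<m. \<Sum>b<m.
      d a * d b * ((G $$ (s, a) * G $$ (s, b)) * (G $$ (t, a) * G $$ (t, b))))"
    unfolding power2_eq_square sum_product by (intro sum.cong refl) (simp add: ac_simps)
  also have "\<dots> = (\<Sum>a<m. \<Sum>b<m. \<Sum>s<n. \<Sum>t<n.
      d a * d b * ((G $$ (s, a) * G $$ (s, b)) * (G $$ (t, a) * G $$ (t, b))))"
    by (simp only: sum.swap[of _ "{..<m}" "{..<n}"])
  also have "\<dots> = (\<Sum>a<m. \<Sum>b<m. d a * d b * (\<Sum>s<n. G $$ (s, a) * G $$ (s, b))\<^sup>2)"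
    unfolding power2_eq_square sum_product sum_distrib_left
    by (intro sum.cong refl) (simp add: ac_simps sum_distrib_left)
  finally show ?thesis
    using G by (simp add: M_def d_def scalar_prod_sum[of _ n])
qed

lemma quadratic_form_delta_plus_gram_ge:
  fixes d :: "nat \<Rightarrow> real" and u :: "nat \<Rightarrow> real vec"
  assumes u: "\<And>a. a < m \<Longrightarrow> u a \<in> carrier_vec n"
  shows "2 * (\<Sum>a<m. (d a)\<^sup>2) \<le> (\<Sum>a<m. \<Sum>b<m. d a * d b * (2 * of_bool (a = b) + u a \<bullet> u b))"
proof -
  have "(\<Sum>a<m. \<Sum>b<m. d a * d b * (u a \<bullet> u b)) = (\<Sum>a<m. \<Sum>b<m. \<Sum>x<n. d a * d b * (u a $ x * u b $ x))"
    using u by (simp add: scalar_prod_sum[of _ n] sum_distrib_left)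
  also have "\<dots> = (\<Sum>a<m. \<Sum>x<n. \<Sum>b<m. d a * d b * (u a $ x * u b $ x))"
    by (intro sum.cong refl sum.swap)
  also have "\<dots> = (\<Sum>x<n. \<Sum>a<m. \<Sum>b<m. d a * d b * (u a $ x * u b $ x))"
    by (rule sum.swap)
  also have "\<dots> = (\<Sum>x<n. (\<Sum>a<m. d a * u a $ x)\<^sup>2)"
    unfolding power2_eq_square sum_product by (intro sum.cong refl) (simp add: ac_simps)
  finally have "0 \<le> (\<Sum>a<m. \<Sum>b<m. d a * d b * (u a \<bullet> u b))"
    by (simp add: sum_nonneg)
  moreover have "(\<Sum>a<m. \<Sum>b<m. d a * d b * (2 * of_bool (a = b))) = 2 * (\<Sum>a<m. (d a)\<^sup>2)"
    unfolding of_bool_def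
    by (simp add: if_distrib[of "\<lambda>x. _ * x"] sum_distrib_left power2_eq_square ac_simps cong: if_cong)
  ultimately show ?thesis
    by (simp add: distrib_left sum.distrib)
qed

section \<open>Pairs and the incidence matrix\<close>

lemma set_pairs: "set (pairs k) = {(i, j). i < j \<and> j < k}"
  unfolding pairs_def by (auto simp: image_iff)

lemma distinct_pairs: "distinct (pairs k)"
  unfolding pairs_def
  by (intro distinct_concat) (auto simp: distinct_map inj_on_def dest!: arg_cong[where f=length])

lemma card_strict_pairs: "card {(i, j). i < j \<and> j < k} = k choose 2"
proof (induction k)
  case (Suc k)
  have split: "{(i, j). i < j \<and> j < Suc k} = {(i, j). i < j \<and> j < k} \<union> (\<lambda>i. (i, k)) ` {..<k}"
    by auto
  have "finite {(i, j). i < j \<and> j < k}"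
    by (rule finite_subset[of _ "{..<k} \<times> {..<k}"]) auto
  moreover have "card ((\<lambda>i. (i, k)) ` {..<k}) = k"
    by (simp add: card_image inj_on_def)
  ultimately have "card {(i, j). i < j \<and> j < Suc k} = (k choose 2) + k"
    unfolding split using Suc by (subst card_Un_disjoint) auto
  then show ?case by (simp add: numeral_2_eq_2)
qed simp

lemma length_pairs: "length (pairs k) = k choose 2"
  using distinct_card[OF distinct_pairs] card_strict_pairs set_pairs by metis

lemma nth_pairs_less:
  assumes "a < k choose 2"
  shows "fst (pairs k ! a) < snd (pairs k ! a)" "snd (pairs k ! a) < k"
  using nth_mem[of a "pairs k"] assms by (auto simp: length_pairs set_pairs)

lemma nth_pairs_eq_iff:
  "a < k choose 2 \<Longrightarrow> b < k choose 2 \<Longrightarrow> pairs k ! a = pairs k ! b \<longleftrightarrow> a = b"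
  by (simp add: nth_eq_iff_index_eq distinct_pairs length_pairs)

lemma sum_nth_pairs:
  "(\<Sum>a<k choose 2. f (pairs k ! a)) = (\<Sum>p\<in>{(i, j). i < j \<and> j < k}. f p)"
proof -
  have "(\<Sum>a<k choose 2. f (pairs k ! a)) = sum_list (map f (pairs k))"
    by (simp add: sum_list_sum_nth atLeast0LessThan length_pairs)
  then show ?thesis
    by (simp add: sum_list_distinct_conv_sum_set distinct_pairs set_pairs)
qed

lemma sum_strict_pairs_symmetric:
  fixes f :: "nat \<Rightarrow> nat \<Rightarrow> real"
  assumes "\<And>i j. f i j = f j i" "\<And>i. f i i = 0"
  shows "2 * (\<Sum>(i, j)\<in>{(i, j). i < j \<and> j < k}. f i j) = (\<Sum>i<k. \<Sum>j<k. f i j)"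
proof -
  define upper where "upper = {(i, j). i < j \<and> j < k}"
  define lower where "lower = {(i, j). j < i \<and> i < k}"
  define diag where "diag = {(i, j). i = j \<and> i < k}"
  have finite: "finite upper" "finite lower" "finite diag"
    unfolding upper_def lower_def diag_def by (auto intro: finite_subset[of _ "{..<k} \<times> {..<k}"])
  have square: "{..<k} \<times> {..<k} = upper \<union> lower \<union> diag"
    unfolding upper_def lower_def diag_def by auto
  have "(\<Sum>i<k. \<Sum>j<k. f i j) = (\<Sum>(i, j)\<in>upper \<union> lower \<union> diag. f i j)"
    by (simp add: sum.cartesian_product square)
  also have "\<dots> = (\<Sum>(i, j)\<in>upper. f i j) + (\<Sum>(i, j)\<in>lower. f i j) + (\<Sum>(i, j)\<in>diag. f i j)"
    using finite by (subst sum.union_disjoint, simp_all, force simp: upper_def lower_def diag_def)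
      (subst sum.union_disjoint, simp_all, force simp: upper_def lower_def)
  also have "(\<Sum>(i, j)\<in>lower. f i j) = (\<Sum>(i, j)\<in>upper. f i j)"
    by (rule sum.reindex_bij_witness[where i=prod.swap and j=prod.swap])
      (auto simp: upper_def lower_def assms(1))
  also have "(\<Sum>(i, j)\<in>diag. f i j) = 0"
    by (rule sum.neutral) (auto simp: diag_def assms(2))
  finally show ?thesis unfolding upper_def by simp
qed

lemma sum_sum_diff_mult_diff:
  fixes x y :: "nat \<Rightarrow> real"
  shows "(\<Sum>i<k. \<Sum>j<k. (x i - x j) * (y i - y j))
       = 2 * real k * (\<Sum>i<k. x i * y i) - 2 * (\<Sum>i<k. x i) * (\<Sum>i<k. y i)"
  by (simp add: algebra_simps sum.distrib sum_subtractf sum_distrib_left sum_distrib_right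
      sum.swap[of "\<lambda>i j. x j * y i"])

lemma sum_strict_pairs_diff_mult_diff:
  fixes x y :: "nat \<Rightarrow> real"
  shows "(\<Sum>(i, j)\<in>{(i, j). i < j \<and> j < k}. (x i - x j) * (y i - y j))
       = real k * (\<Sum>i<k. x i * y i) - (\<Sum>i<k. x i) * (\<Sum>i<k. y i)"
proof -
  have "2 * (\<Sum>(i, j)\<in>{(i, j). i < j \<and> j < k}. (x i - x j) * (y i - y j))
      = (\<Sum>i<k. \<Sum>j<k. (x i - x j) * (y i - y j))"
    by (rule sum_strict_pairs_symmetric) (simp_all add: algebra_simps)
  then show ?thesis using sum_sum_diff_mult_diff[of x y k] by linarith
qed

lemma incidence_inner_sq:
  fixes i j p q k :: nat
  assumes "i < j" "j < k" "p < q" "q < k"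
  shows "((unit_vec k i - unit_vec k j) \<bullet> (unit_vec k p - unit_vec k q))\<^sup>2
       = 2 * of_bool ((i, j) = (p, q)) + (unit_vec k i + unit_vec k j) \<bullet> (unit_vec k p + unit_vec k q :: real vec)"
proof -
  have diff: "(unit_vec k i - unit_vec k j) \<bullet> (unit_vec k p - unit_vec k q)
      = of_bool (i = p) - of_bool (i = q) - of_bool (j = p) + (of_bool (j = q) :: real)"
    using assms by (simp add: minus_scalar_prod_distrib[of _ k] scalar_prod_minus_distrib[of _ k])
  have sum: "(unit_vec k i + unit_vec k j) \<bullet> (unit_vec k p + unit_vec k q)
      = of_bool (i = p) + of_bool (i = q) + of_bool (j = p) + (of_bool (j = q) :: real)"
    using assms by (simp add: add_scalar_prod_distrib[of _ k] scalar_prod_add_distrib[of _ k])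
  show ?thesis
    unfolding diff sum using assms by (auto simp: of_bool_def power2_eq_square)
qed

lemma incB_carrier: "incB k \<in> carrier_mat k (k choose 2)"
  unfolding incB_def by (metis length_map length_pairs mat_of_cols_carrier(1))

lemma col_incB:
  assumes "a < k choose 2"
  shows "col (incB k) a = unit_vec k (fst (pairs k ! a)) - unit_vec k (snd (pairs k ! a))"
  using assms by (simp add: incB_def length_pairs case_prod_beta)

lemma col_incB_inner_ones:
  "a < k choose 2 \<Longrightarrow> col (incB k) a \<bullet> vec k (\<lambda>_. 1) = (0 :: real)"
  using nth_pairs_less[of a k] by (simp add: col_incB minus_scalar_prod_distrib[of _ k])

section \<open>The normalised incidence matrix\<close>

locale ones_complement_basis =
  fixes k :: nat and P G :: "real mat"
  assumes k2: "k \<ge> 2"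
    and P_carrier: "P \<in> carrier_mat (k - 1) k"
    and orthonormal: "\<forall>i < k - 1. \<forall>j < k - 1. row P i \<bullet> row P j = (if i = j then 1 else 0)"
    and perp_ones: "\<forall>i < k - 1. row P i \<bullet> vec k (\<lambda>_. 1) = 0"
    and spans: "\<forall>v \<in> carrier_vec k. v \<bullet> vec k (\<lambda>_. 1) = 0 \<longrightarrow>
                   (\<exists>c \<in> carrier_vec (k - 1). v = transpose_mat P *\<^sub>v c)"
    and G_eq: "G = (1 / sqrt (real k)) \<cdot>\<^sub>m (P * incB k)"
begin

lemma P_mult_transpose: "P * transpose_mat P = 1\<^sub>m (k - 1)"
  using P_carrier orthonormal by (intro eq_matI) auto

lemma inner_mult_mat_vec_P:
  assumes v: "v \<in> carrier_vec k" and w: "w \<in> carrier_vec k" "w \<bullet> vec k (\<lambda>_. 1) = 0"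
  shows "(P *\<^sub>v v) \<bullet> (P *\<^sub>v w) = v \<bullet> w"
proof -
  obtain c where c: "c \<in> carrier_vec (k - 1)" "w = transpose_mat P *\<^sub>v c"
    using spans w by blast
  have "P *\<^sub>v w = c"
    using c P_carrier by (simp flip: assoc_mult_mat_vec add: P_mult_transpose)
  then have "(P *\<^sub>v v) \<bullet> (P *\<^sub>v w) = (transpose_mat P *\<^sub>v c) \<bullet> v"
    using c v P_carrier by (simp add: transpose_vec_mult_scalar comm_scalar_prod[of _ "k - 1"])
  also have "\<dots> = v \<bullet> w"
    unfolding c(2) using c v P_carrier by (intro comm_scalar_prod[of _ k]) auto
  finally show ?thesis .
qed

lemma G_carrier: "G \<in> carrier_mat (k - 1) (k choose 2)"
  using P_carrier incB_carrier by (simp add: G_eq)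

lemma inner_col_G:
  assumes "a < k choose 2" "b < k choose 2"
  shows "col G a \<bullet> col G b = (col (incB k) a \<bullet> col (incB k) b) / real k"
proof -
  have "col G a = (1 / sqrt (real k)) \<cdot>\<^sub>v (P *\<^sub>v col (incB k) a)" if "a < k choose 2" for a
    using that P_carrier incB_carrier[of k] by (simp add: G_eq col_mult2[OF P_carrier incB_carrier])
  then show ?thesis
    using assms P_carrier incB_carrier
    by (simp add: inner_mult_mat_vec_P col_incB_inner_ones power2_eq_square[symmetric] k2)
qed

lemma vnorm_col_G:
  assumes "a < k choose 2"
  shows "vnorm (col G a) = sqrt (2 / real k)"
  using assms nth_pairs_less[OF assms]
  by (simp add: vnorm_def inner_col_G col_incB minus_scalar_prod_distrib[of _ k]
      scalar_prod_minus_distrib[of _ k])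

lemma index_G:
  assumes "s < k - 1" "a < k choose 2"
  shows "G $$ (s, a) = (P $$ (s, fst (pairs k ! a)) - P $$ (s, snd (pairs k ! a))) / sqrt (real k)"
  using assms P_carrier incB_carrier[of k] nth_pairs_less[OF assms(2)]
  by (simp add: G_eq col_incB scalar_prod_minus_distrib[of _ k])

lemma G_mult_transpose: "G * transpose_mat G = 1\<^sub>m (k - 1)"
proof (rule eq_matI)
  fix s t assume "s < dim_row (1\<^sub>m (k - 1) :: real mat)" "t < dim_col (1\<^sub>m (k - 1) :: real mat)"
  then have s: "s < k - 1" and t: "t < k - 1" by auto
  have "(G * transpose_mat G) $$ (s, t) = (\<Sum>a<k choose 2. G $$ (s, a) * G $$ (t, a))"
    using G_carrier s t by (subst index_mult_mat_sum[of _ "k - 1" "k choose 2" _ "k - 1"]) auto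
  also have "\<dots> = (\<Sum>a<k choose 2. (\<lambda>(i, j). (P $$ (s, i) - P $$ (s, j)) * (P $$ (t, i) - P $$ (t, j)))
      (pairs k ! a)) / real k"
    unfolding sum_divide_distrib using k2
    by (intro sum.cong refl) (simp add: index_G[OF s] index_G[OF t] case_prod_beta)
  also have "\<dots> = (\<Sum>(i, j)\<in>{(i, j). i < j \<and> j < k}.
      (P $$ (s, i) - P $$ (s, j)) * (P $$ (t, i) - P $$ (t, j))) / real k"
    by (simp only: sum_nth_pairs)
  also have "\<dots> = (real k * (row P s \<bullet> row P t)
      - (row P s \<bullet> vec k (\<lambda>_. 1)) * (row P t \<bullet> vec k (\<lambda>_. 1))) / real k"
    using P_carrier s t by (simp add: sum_strict_pairs_diff_mult_diff scalar_prod_sum[of _ k])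
  also have "\<dots> = 1\<^sub>m (k - 1) $$ (s, t)"
    using s t k2 orthonormal perp_ones by simp
  finally show "(G * transpose_mat G) $$ (s, t) = 1\<^sub>m (k - 1) $$ (s, t)" .
qed (use G_carrier in auto)

lemma frob_norm_G_diagonal_G_sq_ge:
  assumes D: "D \<in> carrier_mat (k choose 2) (k choose 2)" "diagonal_mat D"
  shows "2 * (frob_norm D)\<^sup>2 / (real k)\<^sup>2 \<le> (frob_norm (G * D * transpose_mat G))\<^sup>2"
proof -
  define d where "d a = D $$ (a, a)" for a
  define u where "u a = unit_vec k (fst (pairs k ! a)) + (unit_vec k (snd (pairs k ! a)) :: real vec)" for a
  have gram_sq: "(col G a \<bullet> col G b)\<^sup>2 = (2 * of_bool (a = b) + u a \<bullet> u b) / (real k)\<^sup>2"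
    if "a < k choose 2" "b < k choose 2" for a b
    using that nth_pairs_less[OF that(1)] nth_pairs_less[OF that(2)]
      incidence_inner_sq[of "fst (pairs k ! a)" "snd (pairs k ! a)" k "fst (pairs k ! b)" "snd (pairs k ! b)"]
    by (simp add: inner_col_G col_incB u_def power_divide prod_eq_iff[symmetric] nth_pairs_eq_iff)
  have "2 * (frob_norm D)\<^sup>2
      \<le> (\<Sum>a<k choose 2. \<Sum>b<k choose 2. d a * d b * (2 * of_bool (a = b) + u a \<bullet> u b))"
    unfolding frob_norm_diagonal_sq[OF D] d_def[symmetric]
    by (rule quadratic_form_delta_plus_gram_ge[where n = k]) (simp add: u_def)
  also have "\<dots> = (real k)\<^sup>2 * (frob_norm (G * D * transpose_mat G))\<^sup>2"
  proof -
    have "(frob_norm (G * D * transpose_mat G))\<^sup>2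
        = (\<Sum>a<k choose 2. \<Sum>b<k choose 2. d a * d b * (2 * of_bool (a = b) + u a \<bullet> u b)) / (real k)\<^sup>2"
      unfolding frob_norm_mult_diagonal_mult_transpose_sq[OF G_carrier D] d_def sum_divide_distrib
      by (intro sum.cong refl) (simp add: gram_sq)
    then show ?thesis using k2 by simp
  qed
  finally show ?thesis
    using k2 by (simp add: divide_le_eq mult.commute)
qed

lemma op_norm_G_diagonal_G_ge:
  assumes "D \<in> carrier_mat (k choose 2) (k choose 2)" "diagonal_mat D"
  shows "(1 / real k) * sqrt (2 / (real k - 1)) * frob_norm D \<le> op_norm (G * D * transpose_mat G)"
proof -
  define M where "M = G * D * transpose_mat G"
  have "dim_col M = k - 1"
    using G_carrier assms by (simp add: M_def)
  then have "2 * (frob_norm D)\<^sup>2 / (real k)\<^sup>2 \<le> (real k - 1) * (op_norm M)\<^sup>2"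
    using frob_norm_G_diagonal_G_sq_ge[OF assms] frob_norm_sq_le_op_norm_sq[of M] k2
    by (simp add: M_def of_nat_diff)
  then have "((1 / real k) * sqrt (2 / (real k - 1)) * frob_norm D)\<^sup>2 \<le> (op_norm M)\<^sup>2"
    using k2 by (simp add: power_mult_distrib power_divide field_simps)
  moreover have "0 \<le> op_norm M"
    by (rule op_norm_nonneg)
  ultimately show ?thesis
    unfolding M_def by (rule power2_le_imp_le)
qed

end

theorem lemma10:
  fixes k :: nat and P :: "real mat"
  assumes k2: "k \<ge> 2"
    and Pcar: "P \<in> carrier_mat (k - 1) k"
    and orthonormal: "\<forall>i < k - 1. \<forall>j < k - 1. row P i \<bullet> row P j = (if i = j then 1 else 0)"
    and perp_ones: "\<forall>i < k - 1. row P i \<bullet> vec k (\<lambda>_. 1) = 0"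
    and spans: "\<forall>v \<in> carrier_vec k. v \<bullet> vec k (\<lambda>_. 1) = 0 \<longrightarrow>
                   (\<exists>c \<in> carrier_vec (k - 1). v = transpose_mat P *\<^sub>v c)"
  defines "G \<equiv> (1 / sqrt (real k)) \<cdot>\<^sub>m (P * incB k)"
  shows "(\<forall>j < k choose 2. vnorm (col G j) = sqrt (2 / real k))
       \<and> G * transpose_mat G = 1\<^sub>m (k - 1)
       \<and> (\<forall>D \<in> carrier_mat (k choose 2) (k choose 2). diagonal_mat D \<longrightarrow>
            op_norm (G * D * transpose_mat G)
              \<ge> (1 / real k) * sqrt (2 / (real k - 1)) * frob_norm D)"
proof -
  interpret ones_complement_basis k P G
    using assms by unfold_locales (simp_all add: G_def)
  show ?thesis
    using vnorm_col_G G_mult_transpose op_norm_G_diagonal_G_ge by auto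
qed

end
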